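(* For non-negative integers $m$ and $n$, \[ \overline{{m+n \brack n}}_{q,t} = \sum_{k=0}^{\min\{m,n\}} t^k q^{\frac{k(k+1)}{2}} \frac{(q;q)_{m+n-k}}{(q;q)_k(q;q)_{m-k}(q;q)_{n-k}}. \]
   Context: An overpartition is a partition in which the last occurrence of each distinct part size may be overlined; its weight $|\lambda|$ is the sum of its parts. $\overline{{m+n \brack n}}_{q,t}=\sum_{\lambda} t^{\#_o(\lambda)} q^{|\lambda|}$, the sum over all overpartitions $\lambda$ with largest part at most $m$ and at most $n$ parts, $\#_o(\lambda)$ being the number of overlined parts. $(q;q)_k=\prod_{j=1}^k(1-q^j)$. *)

theory Defs
  imports Main "HOL-Library.Multiset"
begin

text \<open>An overpartition is encoded as a pair (M, S): M is the multiset of parts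
(positive integers) and S is the set of part sizes whose last occurrence is overlined
(so S is a subset of the distinct parts).\<close>

definition overpartitions_bounded :: "nat \<Rightarrow> nat \<Rightarrow> (nat multiset \<times> nat set) set" where
  "overpartitions_bounded m n =
     {(M, S). set_mset M \<subseteq> {1..m} \<and> size M \<le> n \<and> S \<subseteq> set_mset M}"

definition overgauss :: "nat \<Rightarrow> nat \<Rightarrow> 'a::comm_ring_1 \<Rightarrow> 'a \<Rightarrow> 'a" where
  "overgauss m n q t =
     (\<Sum>(M, S) \<in> overpartitions_bounded m n. t ^ card S * q ^ sum_mset M)"

definition qpoch :: "'a::comm_ring_1 \<Rightarrow> nat \<Rightarrow> 'a" where
  "qpoch q k = (\<Prod>j=1..k. 1 - q ^ j)"

end

theory Submission
  imports Defs
begin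

text \<open>Deleting the overlined parts of an overpartition counted by overgauss m n leaves a set
of k distinct parts in {1..m} together with an ordinary partition into at most n - k parts, each
at most m. Their generating functions are q^(k(k+1)/2) (q;q)_m / ((q;q)_k (q;q)_(m-k)) and
(q;q)_(m+n-k) / ((q;q)_m (q;q)_(n-k)); each closed form is checked against the q-Pascal
recurrence obtained by asking whether the part m occurs. In the product the factors (q;q)_m
cancel.\<close>

lemma qpoch_0 [simp]: "qpoch q 0 = 1"
  by (simp add: qpoch_def)

lemma qpoch_Suc: "qpoch q (Suc k) = qpoch q k * (1 - q ^ Suc k)"
  by (simp add: qpoch_def)

definition bounded_partitions :: "nat \<Rightarrow> nat \<Rightarrow> nat multiset set" where
  "bounded_partitions m r = {M. set_mset M \<subseteq> {1..m} \<and> size M \<le> r}"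

definition partition_gf :: "nat \<Rightarrow> nat \<Rightarrow> 'a::comm_ring_1 \<Rightarrow> 'a" where
  "partition_gf m r q = (\<Sum>M\<in>bounded_partitions m r. q ^ sum_mset M)"

lemma finite_bounded_partitions: "finite (bounded_partitions m r)"
proof (rule finite_subset)
  show "bounded_partitions m r \<subseteq> mset ` {xs. set xs \<subseteq> {1..m} \<and> length xs \<le> r}"
  proof
    fix M assume "M \<in> bounded_partitions m r"
    moreover obtain xs where "M = mset xs" by (metis ex_mset)
    ultimately show "M \<in> mset ` {xs. set xs \<subseteq> {1..m} \<and> length xs \<le> r}"
      by (auto simp: bounded_partitions_def)
  qed
  show "finite (mset ` {xs. set xs \<subseteq> {1..m} \<and> length xs \<le> r})"
    by (intro finite_imageI finite_lists_length_le) simp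
qed

lemma bounded_partitions_Suc_Suc:
  "bounded_partitions (Suc m) (Suc r) =
     bounded_partitions m (Suc r) \<union> add_mset (Suc m) ` bounded_partitions (Suc m) r"
proof (intro equalityI subsetI)
  fix M assume M: "M \<in> bounded_partitions (Suc m) (Suc r)"
  show "M \<in> bounded_partitions m (Suc r) \<union> add_mset (Suc m) ` bounded_partitions (Suc m) r"
  proof (cases "Suc m \<in># M")
    case True
    then have "M = add_mset (Suc m) (M - {#Suc m#})" by simp
    moreover have "M - {#Suc m#} \<in> bounded_partitions (Suc m) r"
      using M True by (auto simp: bounded_partitions_def size_Diff_submset dest: in_diffD)
    ultimately show ?thesis by blast
  next
    case False
    with M show ?thesis by (auto simp: bounded_partitions_def le_Suc_eq)
  qed
qed (auto simp: bounded_partitions_def)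

lemma partition_gf_Suc_Suc:
  "partition_gf (Suc m) (Suc r) q = partition_gf m (Suc r) q + q ^ Suc m * partition_gf (Suc m) r q"
proof -
  have "bounded_partitions m (Suc r) \<inter> add_mset (Suc m) ` bounded_partitions (Suc m) r = {}"
    by (auto simp: bounded_partitions_def)
  then have "partition_gf (Suc m) (Suc r) q = partition_gf m (Suc r) q
      + (\<Sum>M\<in>add_mset (Suc m) ` bounded_partitions (Suc m) r. q ^ sum_mset M)"
    unfolding partition_gf_def bounded_partitions_Suc_Suc
    by (intro sum.union_disjoint) (auto simp: finite_bounded_partitions)
  also have "(\<Sum>M\<in>add_mset (Suc m) ` bounded_partitions (Suc m) r. q ^ sum_mset M)
      = q ^ Suc m * partition_gf (Suc m) r q"
    by (subst sum.reindex) (auto simp: partition_gf_def sum_distrib_left power_add inj_on_def mult.assoc)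
  finally show ?thesis .
qed

lemma partition_gf_qpoch: "partition_gf m r q * qpoch q m * qpoch q r = qpoch q (m + r)"
proof (induction m arbitrary: r)
  case 0
  have "bounded_partitions 0 r = {{#}}" by (auto simp: bounded_partitions_def)
  then show ?case by (simp add: partition_gf_def)
next
  case (Suc m)
  note IH_m = Suc.IH
  show ?case
  proof (induction r)
    case 0
    have "bounded_partitions (Suc m) 0 = {{#}}" by (auto simp: bounded_partitions_def)
    then show ?case by (simp add: partition_gf_def)
  next
    case (Suc r)
    have "partition_gf (Suc m) (Suc r) q * qpoch q (Suc m) * qpoch q (Suc r)
      = (partition_gf m (Suc r) q * qpoch q m * qpoch q (Suc r)) * (1 - q ^ Suc m)
        + q ^ Suc m * (partition_gf (Suc m) r q * qpoch q (Suc m) * qpoch q r) * (1 - q ^ Suc r)"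
      by (simp add: partition_gf_Suc_Suc qpoch_Suc algebra_simps)
    also have "\<dots> = qpoch q (m + Suc r) * ((1 - q ^ Suc m) + q ^ Suc m * (1 - q ^ Suc r))"
      using Suc.IH IH_m[of "Suc r"] by (simp add: algebra_simps)
    also have "\<dots> = qpoch q (Suc m + Suc r)"
      by (simp add: qpoch_Suc algebra_simps power_add)
    finally show ?case .
  qed
qed

lemma subsets_card_Suc_insert:
  assumes "finite A" "x \<notin> A"
  shows "{S. S \<subseteq> insert x A \<and> card S = Suc k} =
     {S. S \<subseteq> A \<and> card S = Suc k} \<union> insert x ` {S. S \<subseteq> A \<and> card S = k}"
proof (intro equalityI subsetI)
  fix S assume S: "S \<in> {S. S \<subseteq> insert x A \<and> card S = Suc k}"
  then have "finite S" using assms(1) finite_subset by auto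
  show "S \<in> {S. S \<subseteq> A \<and> card S = Suc k} \<union> insert x ` {S. S \<subseteq> A \<and> card S = k}"
  proof (cases "x \<in> S")
    case True
    then have "S = insert x (S - {x})" "S - {x} \<in> {S. S \<subseteq> A \<and> card S = k}"
      using S \<open>finite S\<close> by auto
    then show ?thesis by blast
  qed (use S in auto)
next
  fix S assume "S \<in> {S. S \<subseteq> A \<and> card S = Suc k} \<union> insert x ` {S. S \<subseteq> A \<and> card S = k}"
  then show "S \<in> {S. S \<subseteq> insert x A \<and> card S = Suc k}"
    using assms by (auto simp: finite_subset subset_iff card_insert_if)
qed

definition distinct_partition_gf :: "nat \<Rightarrow> nat \<Rightarrow> 'a::comm_ring_1 \<Rightarrow> 'a" where
  "distinct_partition_gf m k q = (\<Sum>S | S \<subseteq> {1..m} \<and> card S = k. q ^ \<Sum>S)"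

lemma distinct_partition_gf_Suc_Suc:
  "distinct_partition_gf (Suc m) (Suc k) q =
     distinct_partition_gf m (Suc k) q + q ^ Suc m * distinct_partition_gf m k q"
proof -
  let ?D = "\<lambda>k. {S. S \<subseteq> {1..m} \<and> card S = k}"
  have fin: "finite (?D k)" for k
    by (rule finite_subset[of _ "Pow {1..m}"]) auto
  have "{1..Suc m} = insert (Suc m) {1..m}" by auto
  then have split: "{S. S \<subseteq> {1..Suc m} \<and> card S = Suc k} = ?D (Suc k) \<union> insert (Suc m) ` ?D k"
    by (simp only:) (rule subsets_card_Suc_insert; simp)
  have disjoint: "?D (Suc k) \<inter> insert (Suc m) ` ?D k = {}" by auto
  have "distinct_partition_gf (Suc m) (Suc k) q =
      distinct_partition_gf m (Suc k) q + (\<Sum>S\<in>insert (Suc m) ` ?D k. q ^ \<Sum>S)"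
    unfolding distinct_partition_gf_def split using fin disjoint by (intro sum.union_disjoint) auto
  also have "(\<Sum>S\<in>insert (Suc m) ` ?D k. q ^ \<Sum>S) = q ^ Suc m * distinct_partition_gf m k q"
  proof -
    have new: "Suc m \<notin> S" "finite S" if "S \<in> ?D k" for S
      using that by (auto intro: finite_subset)
    have "inj_on (insert (Suc m)) (?D k)"
      by (rule inj_onI) (metis new(1) insert_ident)
    then have "(\<Sum>S\<in>insert (Suc m) ` ?D k. q ^ \<Sum>S) = (\<Sum>S\<in>?D k. q ^ \<Sum>(insert (Suc m) S))"
      by (simp add: sum.reindex)
    also have "\<dots> = (\<Sum>S\<in>?D k. q ^ Suc m * q ^ \<Sum>S)"
    proof (rule sum.cong)
      fix S assume "S \<in> ?D k"
      from new[OF this] show "q ^ \<Sum>(insert (Suc m) S) = q ^ Suc m * q ^ \<Sum>S"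
        by (simp add: power_add)
    qed simp
    finally show ?thesis by (simp add: distinct_partition_gf_def sum_distrib_left)
  qed
  finally show ?thesis .
qed

lemma distinct_partition_gf_0 [simp]: "distinct_partition_gf m 0 q = 1"
proof -
  have "S = {}" if "S \<subseteq> {1..m}" "card S = 0" for S
    using that by (meson card_0_eq finite_atLeastAtMost finite_subset)
  then have "{S. S \<subseteq> {1..m} \<and> card S = 0} = {{}}"
    by auto
  then show ?thesis by (simp add: distinct_partition_gf_def)
qed

lemma distinct_partition_gf_eq_0: "m < k \<Longrightarrow> distinct_partition_gf m k q = 0"
proof -
  assume "m < k"
  have "card S \<noteq> k" if "S \<subseteq> {1..m}" for S
    using card_mono[OF _ that] \<open>m < k\<close> by simp
  then have "{S. S \<subseteq> {1..m} \<and> card S = k} = {}"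
    by blast
  then show ?thesis
    unfolding distinct_partition_gf_def by (simp only: sum.empty)
qed

lemma distinct_partition_gf_qpoch:
  "k \<le> m \<Longrightarrow>
     distinct_partition_gf m k q * qpoch q k * qpoch q (m - k) = q ^ (k * (k + 1) div 2) * qpoch q m"
proof (induction m arbitrary: k)
  case 0
  then show ?case by simp
next
  case (Suc m)
  show ?case
  proof (cases k)
    case 0
    then show ?thesis by simp
  next
    case (Suc j)
    with Suc.prems have "j \<le> m" by simp
    have triangle: "Suc j * (Suc j + 1) div 2 = j * (j + 1) div 2 + Suc j"
      by (simp add: algebra_simps)
    have lower: "distinct_partition_gf m j q * qpoch q j * qpoch q (m - j)
        = q ^ (j * (j + 1) div 2) * qpoch q m"
      using Suc.IH[OF \<open>j \<le> m\<close>] .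
    have upper: "distinct_partition_gf m (Suc j) q * qpoch q (Suc j) * qpoch q (m - j)
        = q ^ (Suc j * (Suc j + 1) div 2) * qpoch q m * (1 - q ^ (m - j))"
    proof (cases "j = m")
      case True
      \<comment> \<open>both sides vanish: there is no (m+1)-subset of {1..m}, and 1 - q ^ 0 = 0\<close>
      then show ?thesis by (simp add: distinct_partition_gf_eq_0)
    next
      case False
      with \<open>j \<le> m\<close> have "m - j = Suc (m - Suc j)" "Suc j \<le> m" by auto
      then have "distinct_partition_gf m (Suc j) q * qpoch q (Suc j) * qpoch q (m - j)
          = (distinct_partition_gf m (Suc j) q * qpoch q (Suc j) * qpoch q (m - Suc j))
            * (1 - q ^ (m - j))"
        by (simp only: qpoch_Suc mult.assoc)
      then show ?thesis
        using Suc.IH[OF \<open>Suc j \<le> m\<close>] by simp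
    qed
    have "Suc m = Suc j + (m - j)"
      using \<open>j \<le> m\<close> by simp
    then have power_split: "q ^ Suc m = q ^ Suc j * q ^ (m - j)"
      by (metis power_add)
    have "distinct_partition_gf (Suc m) (Suc j) q * qpoch q (Suc j) * qpoch q (Suc m - Suc j)
        = distinct_partition_gf m (Suc j) q * qpoch q (Suc j) * qpoch q (m - j)
          + q ^ Suc m * (distinct_partition_gf m j q * qpoch q j * qpoch q (m - j)) * (1 - q ^ Suc j)"
      by (simp only: distinct_partition_gf_Suc_Suc diff_Suc_Suc qpoch_Suc[of q j])
        (simp add: algebra_simps)
    also have "\<dots> = q ^ (Suc j * (Suc j + 1) div 2) * qpoch q m * (1 - q ^ (m - j))
          + q ^ Suc m * (q ^ (j * (j + 1) div 2) * qpoch q m) * (1 - q ^ Suc j)"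
      by (simp only: upper lower)
    also have "\<dots> = q ^ (Suc j * (Suc j + 1) div 2) * qpoch q (Suc m)"
      unfolding triangle qpoch_Suc power_split by (simp add: power_add algebra_simps)
    finally show ?thesis
      using \<open>k = Suc j\<close> by simp
  qed
qed

lemma mset_set_subseteq_mset: "S \<subseteq> set_mset M \<Longrightarrow> mset_set S \<subseteq># M"
  by (metis finite_set_mset mset_set_set_mset_msubset subset_imp_msubset_mset_set
      subset_mset.order_trans)

lemma bij_betw_overpartitions_bounded:
  "bij_betw (\<lambda>(S, M). (mset_set S + M, S))
     (SIGMA S:{S. S \<subseteq> {1..m} \<and> card S \<le> n}. bounded_partitions m (n - card S))
     (overpartitions_bounded m n)" (is "bij_betw ?f ?A ?B")
proof (rule bij_betw_byWitness[where f' = "\<lambda>(M, S). (S, M - mset_set S)"])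
  show "\<forall>a\<in>?B. ?f ((\<lambda>(M, S). (S, M - mset_set S)) a) = a"
    by (auto simp: overpartitions_bounded_def mset_set_subseteq_mset subset_mset.add_diff_inverse)
  show "?f ` ?A \<subseteq> ?B"
  proof
    fix p assume "p \<in> ?f ` ?A"
    then obtain S M where "p = (mset_set S + M, S)" "S \<subseteq> {1..m}" "card S \<le> n"
      "M \<in> bounded_partitions m (n - card S)"
      by auto
    moreover from \<open>S \<subseteq> {1..m}\<close> have "finite S"
      by (rule finite_subset) simp
    ultimately show "p \<in> ?B"
      by (auto simp: overpartitions_bounded_def bounded_partitions_def)
  qed
  show "(\<lambda>(M, S). (S, M - mset_set S)) ` ?B \<subseteq> ?A"
  proof
    fix p assume "p \<in> (\<lambda>(M, S). (S, M - mset_set S)) ` ?B"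
    then obtain M S where p: "p = (S, M - mset_set S)" and "(M, S) \<in> ?B"
      by auto
    then have "set_mset M \<subseteq> {1..m}" "size M \<le> n" "S \<subseteq> set_mset M" "mset_set S \<subseteq># M"
      by (auto simp: overpartitions_bounded_def mset_set_subseteq_mset)
    moreover have "card S \<le> size M"
      using size_mset_mono[OF \<open>mset_set S \<subseteq># M\<close>] by simp
    ultimately show "p \<in> ?A"
      using p by (auto simp: bounded_partitions_def size_Diff_submset dest: in_diffD)
  qed
qed auto

lemma overgauss_eq_sum_gf:
  "overgauss m n q t =
     (\<Sum>k=0..min m n. t ^ k * distinct_partition_gf m k q * partition_gf m (n - k) q)"
proof -
  let ?A = "{S. S \<subseteq> {1..m} \<and> card S \<le> n}"
  have "finite ?A"
    by (rule finite_subset[of _ "Pow {1..m}"]) auto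
  have card_le: "card S \<le> min m n" if "S \<in> ?A" for S
    using that card_mono[of "{1..m}" S] by simp
  have sum_mset_mset_set: "sum_mset (mset_set S) = \<Sum>S" for S :: "nat set"
    using sum_unfold_sum_mset[of "\<lambda>x. x" S] by simp
  have "overgauss m n q t = (\<Sum>(S, M) \<in> (SIGMA S:?A. bounded_partitions m (n - card S)).
      t ^ card S * q ^ sum_mset (mset_set S + M))"
    unfolding overgauss_def
    by (subst sum.reindex_bij_betw[OF bij_betw_overpartitions_bounded, symmetric])
      (simp add: case_prod_beta)
  also have "\<dots> = (\<Sum>S\<in>?A. t ^ card S * q ^ \<Sum>S * partition_gf m (n - card S) q)"
    by (simp add: sum.Sigma[symmetric] \<open>finite ?A\<close> finite_bounded_partitions partition_gf_def
        sum_distrib_left sum_mset_mset_set power_add mult.assoc)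
  also have "\<dots> = (\<Sum>k=0..min m n. \<Sum>S | S \<in> ?A \<and> card S = k.
      t ^ card S * q ^ \<Sum>S * partition_gf m (n - card S) q)"
    using \<open>finite ?A\<close> card_le by (intro sum.group[symmetric]) auto
  also have "\<dots> = (\<Sum>k=0..min m n. t ^ k * distinct_partition_gf m k q * partition_gf m (n - k) q)"
  proof (rule sum.cong)
    fix k assume "k \<in> {0..min m n}"
    then have "{S. S \<in> ?A \<and> card S = k} = {S. S \<subseteq> {1..m} \<and> card S = k}"
      by auto
    then show "(\<Sum>S | S \<in> ?A \<and> card S = k. t ^ card S * q ^ \<Sum>S * partition_gf m (n - card S) q)
        = t ^ k * distinct_partition_gf m k q * partition_gf m (n - k) q"
      by (simp add: distinct_partition_gf_def sum_distrib_left sum_distrib_right mult_ac)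
  qed simp
  finally show ?thesis .
qed

lemma qpoch_nonzero:
  fixes q :: "'a::idom"
  assumes "\<And>j. 1 \<le> j \<Longrightarrow> j \<le> k \<Longrightarrow> q ^ j \<noteq> 1"
  shows "qpoch q k \<noteq> 0"
  using assms by (auto simp: qpoch_def)

theorem theorem2p2:
  fixes q t :: "'a::field" and m n :: nat
  assumes "\<And>j. 1 \<le> j \<Longrightarrow> j \<le> m + n \<Longrightarrow> q ^ j \<noteq> 1"
  shows "overgauss m n q t =
    (\<Sum>k=0..min m n. t ^ k * q ^ (k * (k + 1) div 2) *
       qpoch q (m + n - k) / (qpoch q k * qpoch q (m - k) * qpoch q (n - k)))"
  unfolding overgauss_eq_sum_gf
proof (rule sum.cong)
  fix k assume "k \<in> {0..min m n}"
  have nonzero: "qpoch q i \<noteq> 0" if "i \<le> m + n" for i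
    using assms that by (intro qpoch_nonzero) auto
  with \<open>k \<in> {0..min m n}\<close> have "qpoch q k \<noteq> 0" "qpoch q (m - k) \<noteq> 0"
    "qpoch q (n - k) \<noteq> 0" "qpoch q m \<noteq> 0"
    by auto
  moreover have "distinct_partition_gf m k q * (qpoch q k * qpoch q (m - k))
      = q ^ (k * (k + 1) div 2) * qpoch q m"
    using \<open>k \<in> {0..min m n}\<close> distinct_partition_gf_qpoch[of k m q] by (simp add: mult.assoc)
  moreover have "partition_gf m (n - k) q * (qpoch q m * qpoch q (n - k)) = qpoch q (m + n - k)"
    using partition_gf_qpoch[of m "n - k" q] \<open>k \<in> {0..min m n}\<close> by (simp add: mult.assoc)
  ultimately have "distinct_partition_gf m k q
        = q ^ (k * (k + 1) div 2) * qpoch q m / (qpoch q k * qpoch q (m - k))"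
      "partition_gf m (n - k) q = qpoch q (m + n - k) / (qpoch q m * qpoch q (n - k))"
    by (simp_all add: eq_divide_eq)
  with \<open>qpoch q m \<noteq> 0\<close> show "t ^ k * distinct_partition_gf m k q * partition_gf m (n - k) q
      = t ^ k * q ^ (k * (k + 1) div 2) *
        qpoch q (m + n - k) / (qpoch q k * qpoch q (m - k) * qpoch q (n - k))"
    by (simp add: mult.assoc)
qed simp

end
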